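(* Let $G$ be a very well-covered graph with $V(G)=\{x_1,\ldots,x_h,y_1,\ldots,y_h\}$ such that $\{x_1,\ldots,x_h\}$ is a minimal vertex cover, $\{y_1,\ldots,y_h\}$ a maximal independent set and $\{x_i,y_i\}\in E(G)$ for all $i$. Let $s\ge1$, $e_1,\ldots,e_s\in E(G)$, and let $G'$ be the graph associated to $(I(G)^{s+1}:e_1\cdots e_s)$ as in the context. Let $y\in V(G)$ and $H=G\setminus N_G[y]$. If $\{e_1,\ldots,e_s\}\cap E(H)=\{e_{i_1},\ldots,e_{i_t}\}$ and $H'$ is the graph associated (in the same way) to $(I(H)^{t+1}:e_{i_1}\cdots e_{i_t})$, then $G'\setminus N_{G'}[y]$ is an induced subgraph of $H'$. In particular $\operatorname{reg}(I(G'\setminus N_{G'}[y]))\le\operatorname{reg}(I(H'))$.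
   Context: $N_G[y]$ is the closed neighbourhood of $y$; for $U\subseteq V(G)$, $G\setminus U$ is the induced subgraph on $V(G)\setminus U$. $I(\cdot)$ is the edge ideal; edges are identified with the products of their endpoints; $\operatorname{reg}$ is Castelnuovo–Mumford regularity. $G$ is very well-covered if it has no isolated vertices, all minimal vertex covers have the same size, and this size is $|V(G)|/2$. Even-connection: a sequence $p_0p_1\cdots p_{2k+1}$, $k\ge1$, with $\{p_r,p_{r+1}\}\in E(G)$ for all $r$, each $\{p_{2\ell+1},p_{2\ell+2}\}$ ($0\le\ell\le k-1$) equal to some $e_m$, each edge used among these at most as many times as it appears in $e_1,\dots,e_s$; then $p_0,p_{2k+1}$ (possibly equal) are even-connected. $(I(G)^{s+1}:e_1\cdots e_s)$ is minimally generated by $uv$ with $\{u,v\}\in E(G)$ or $u,v$ even-connected; the graph associated to it is the graph whose edge ideal is the polarization of this ideal (each generator $u^2$ replaced by $uu^*$ with a new vertex $u^*$). *)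

theory Defs
  imports "HOL-Library.Multiset"
begin

definition graph :: "'a set \<Rightarrow> 'a set set \<Rightarrow> bool" where
  "graph V E \<longleftrightarrow> finite V \<and> (\<forall>e\<in>E. \<exists>a b. a \<noteq> b \<and> e = {a, b} \<and> a \<in> V \<and> b \<in> V)"

definition vertex_cover :: "'a set \<Rightarrow> 'a set set \<Rightarrow> 'a set \<Rightarrow> bool" where
  "vertex_cover V E C \<longleftrightarrow> C \<subseteq> V \<and> (\<forall>e\<in>E. e \<inter> C \<noteq> {})"

definition min_vertex_cover :: "'a set \<Rightarrow> 'a set set \<Rightarrow> 'a set \<Rightarrow> bool" where
  "min_vertex_cover V E C \<longleftrightarrow> vertex_cover V E C \<and> (\<forall>D. D \<subset> C \<longrightarrow> \<not> vertex_cover V E D)"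

definition indep_set :: "'a set \<Rightarrow> 'a set set \<Rightarrow> 'a set \<Rightarrow> bool" where
  "indep_set V E I \<longleftrightarrow> I \<subseteq> V \<and> (\<forall>e\<in>E. \<not> e \<subseteq> I)"

definition max_indep_set :: "'a set \<Rightarrow> 'a set set \<Rightarrow> 'a set \<Rightarrow> bool" where
  "max_indep_set V E I \<longleftrightarrow> indep_set V E I \<and> (\<forall>J. I \<subset> J \<longrightarrow> \<not> indep_set V E J)"

definition very_well_covered :: "'a set \<Rightarrow> 'a set set \<Rightarrow> bool" where
  "very_well_covered V E \<longleftrightarrow> (\<forall>v\<in>V. \<exists>e\<in>E. v \<in> e)
     \<and> (\<forall>C. min_vertex_cover V E C \<longrightarrow> 2 * card C = card V)"

definition cnbhd :: "'a set set \<Rightarrow> 'a \<Rightarrow> 'a set" where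
  "cnbhd E y = insert y {v. {y, v} \<in> E}"

definition del_V :: "'a set \<Rightarrow> 'a set \<Rightarrow> 'a set" where
  "del_V V U = V - U"

definition del_E :: "'a set \<Rightarrow> 'a set set \<Rightarrow> 'a set \<Rightarrow> 'a set set" where
  "del_E V E U = {e \<in> E. e \<subseteq> V - U}"

definition even_connected :: "'a set set \<Rightarrow> 'a set list \<Rightarrow> 'a \<Rightarrow> 'a \<Rightarrow> bool" where
  "even_connected E es u v \<longleftrightarrow>
     (\<exists>k::nat. \<exists>p::nat \<Rightarrow> 'a. k \<ge> 1 \<and> p 0 = u \<and> p (2*k+1) = v
        \<and> (\<forall>r < 2*k+1. {p r, p (Suc r)} \<in> E)
        \<and> (\<forall>l < k. {p (2*l+1), p (2*l+2)} \<in> set es)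
        \<and> (\<forall>e. card {l. l < k \<and> {p (2*l+1), p (2*l+2)} = e} \<le> count (mset es) e))"

text \<open>Graph associated to (I(G)^(s+1) : e_1...e_s), es = [e_1,...,e_s]:
  original vertices Inl v, new polarization vertices Inr u (= u^*).\<close>
definition assoc_V :: "'a set \<Rightarrow> 'a set set \<Rightarrow> 'a set list \<Rightarrow> ('a + 'a) set" where
  "assoc_V V E es = Inl ` V \<union> {Inr u | u. u \<in> V \<and> even_connected E es u u}"

definition assoc_E :: "'a set \<Rightarrow> 'a set set \<Rightarrow> 'a set list \<Rightarrow> ('a + 'a) set set" where
  "assoc_E V E es =
     {{Inl u, Inl v} | u v. {u, v} \<in> E \<or> (u \<noteq> v \<and> even_connected E es u v)}
     \<union> {{Inl u, Inr u} | u. even_connected E es u u}"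

definition induced_subgraph :: "'b set \<Rightarrow> 'b set set \<Rightarrow> 'b set \<Rightarrow> 'b set set \<Rightarrow> bool" where
  "induced_subgraph V1 E1 V2 E2 \<longleftrightarrow> V1 \<subseteq> V2 \<and> E1 = {e \<in> E2. e \<subseteq> V1}"

end

theory Submission
  imports Defs
begin

text \<open>
  A vertex u of G' lies outside N_G'[w] iff u is neither in N_G[w] nor even-connected to w.
  If an even-connection between two such vertices met N_G[w], cutting it there (after reversing
  it, if the parity is wrong) would even-connect one of its ends to w or put that end into
  N_G[w]. So even-connections between surviving vertices run inside H and use only the e_i
  lying in H, while every even-connection of H is one of G.
\<close>

definition even_connection :: "'a set set \<Rightarrow> 'a set list \<Rightarrow> nat \<Rightarrow> (nat \<Rightarrow> 'a) \<Rightarrow> bool" where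
  "even_connection E es k p \<longleftrightarrow> k \<ge> 1 \<and> (\<forall>r < 2*k+1. {p r, p (Suc r)} \<in> E)
     \<and> (\<forall>l < k. {p (2*l+1), p (2*l+2)} \<in> set es)
     \<and> (\<forall>e. card {l. l < k \<and> {p (2*l+1), p (2*l+2)} = e} \<le> count (mset es) e)"

lemma even_connected_iff:
  "even_connected E es u v \<longleftrightarrow> (\<exists>k p. even_connection E es k p \<and> p 0 = u \<and> p (2*k+1) = v)"
  unfolding even_connected_def even_connection_def by blast

lemma even_connection_mono:
  assumes "even_connection E1 es1 k p" "E1 \<subseteq> E" "mset es1 \<subseteq># mset es"
  shows "even_connection E es k p"
proof -
  have "set es1 \<subseteq> set es" "\<And>e. count (mset es1) e \<le> count (mset es) e"
    using assms(3) set_mset_mono mset_subset_eq_count by fastforce+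
  with assms(1,2) show ?thesis
    unfolding even_connection_def by (meson le_trans subsetD)
qed

lemma even_connection_filter:
  assumes "even_connection E es k p" "\<And>r. r < 2*k+1 \<Longrightarrow> {p r, p (Suc r)} \<in> F"
  shows "even_connection F (filter (\<lambda>e. e \<in> F) es) k p"
  unfolding even_connection_def
proof (intro conjI allI impI)
  show "1 \<le> k" using assms(1) by (simp add: even_connection_def)
next
  fix r assume "r < 2*k+1"
  then show "{p r, p (Suc r)} \<in> F" by (rule assms(2))
next
  fix l assume "l < k"
  then have "{p (2*l+1), p (Suc (2*l+1))} \<in> F" using assms(2) by simp
  moreover have "{p (2*l+1), p (2*l+2)} \<in> set es"
    using \<open>l < k\<close> assms(1) by (simp add: even_connection_def)
  ultimately show "{p (2*l+1), p (2*l+2)} \<in> set (filter (\<lambda>e. e \<in> F) es)" by simp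
next
  fix e
  show "card {l. l < k \<and> {p (2*l+1), p (2*l+2)} = e} \<le> count (mset (filter (\<lambda>e. e \<in> F) es)) e"
  proof (cases "e \<in> F")
    case True
    then have "count (mset (filter (\<lambda>e. e \<in> F) es)) e = count (mset es) e" by simp
    then show ?thesis using assms(1) unfolding even_connection_def by presburger
  next
    case False
    have "{p (2*l+1), p (Suc (2*l+1))} \<in> F" if "l < k" for l using assms(2) that by simp
    with False have "{l. l < k \<and> {p (2*l+1), p (2*l+2)} = e} = {}" by auto
    then show ?thesis by (simp only: card.empty le0)
  qed
qed

lemma even_connection_reverse:
  assumes "even_connection E es k p"
  shows "even_connection E es k (\<lambda>r. p (2*k+1-r))"
  unfolding even_connection_def
proof (intro conjI allI impI)
  show "1 \<le> k" using assms by (simp add: even_connection_def)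
next
  fix r assume "r < 2*k+1"
  then have "2*k-r < 2*k+1" "2*k+1-r = Suc (2*k-r)" "2*k+1 - Suc r = 2*k-r" by auto
  then show "{p (2*k+1-r), p (2*k+1-Suc r)} \<in> E"
    using assms by (auto simp: even_connection_def insert_commute)
next
  have pair: "{p (2*k+1-(2*l+1)), p (2*k+1-(2*l+2))} = {p (2*(k-1-l)+1), p (2*(k-1-l)+2)}"
    if "l < k" for l
  proof -
    have "2*k+1-(2*l+1) = 2*(k-1-l)+2" "2*k+1-(2*l+2) = 2*(k-1-l)+1" using that by auto
    then show ?thesis by (simp add: insert_commute)
  qed
  {
    fix l assume "l < k"
    then show "{p (2*k+1-(2*l+1)), p (2*k+1-(2*l+2))} \<in> set es"
      using assms pair by (simp add: even_connection_def)
  next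
    fix e
    have "{l. l < k \<and> {p (2*k+1-(2*l+1)), p (2*k+1-(2*l+2))} = e}
        \<subseteq> (\<lambda>l. k-1-l) ` {l. l < k \<and> {p (2*l+1), p (2*l+2)} = e}"
    proof
      fix l assume "l \<in> {l. l < k \<and> {p (2*k+1-(2*l+1)), p (2*k+1-(2*l+2))} = e}"
      then have "l < k" "k-1-l \<in> {l. l < k \<and> {p (2*l+1), p (2*l+2)} = e}" using pair by auto
      then show "l \<in> (\<lambda>l. k-1-l) ` {l. l < k \<and> {p (2*l+1), p (2*l+2)} = e}"
        by (intro image_eqI[where x = "k-1-l"]) auto
    qed
    then have "card {l. l < k \<and> {p (2*k+1-(2*l+1)), p (2*k+1-(2*l+2))} = e}
        \<le> card ((\<lambda>l. k-1-l) ` {l. l < k \<and> {p (2*l+1), p (2*l+2)} = e})"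
      by (rule card_mono[rotated]) simp
    also have "\<dots> \<le> card {l. l < k \<and> {p (2*l+1), p (2*l+2)} = e}" by (rule card_image_le) simp
    also have "\<dots> \<le> count (mset es) e" using assms by (simp add: even_connection_def)
    finally show "card {l. l < k \<and> {p (2*k+1-(2*l+1)), p (2*k+1-(2*l+2))} = e}
        \<le> count (mset es) e" .
  }
qed

lemma even_connection_ends:
  assumes "even_connection E es k p"
  shows "p 0 \<in> \<Union>E" "p (2*k+1) \<in> \<Union>E"
proof -
  have "{p 0, p (Suc 0)} \<in> E" "{p (2*k), p (Suc (2*k))} \<in> E"
    using assms by (auto simp: even_connection_def)
  then show "p 0 \<in> \<Union>E" "p (2*k+1) \<in> \<Union>E" by auto
qed

lemma even_connected_mem_Union:
  "even_connected E es u v \<Longrightarrow> u \<in> \<Union>E \<and> v \<in> \<Union>E"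
  unfolding even_connected_iff using even_connection_ends by blast

lemma even_connected_mono:
  "even_connected E1 es1 u v \<Longrightarrow> E1 \<subseteq> E \<Longrightarrow> mset es1 \<subseteq># mset es \<Longrightarrow> even_connected E es u v"
  unfolding even_connected_iff using even_connection_mono by blast

text \<open>The walk p(0), ..., p(2m), z keeps the first m pairs of p and is again an even-connection.\<close>

lemma even_connection_prefix_edge:
  assumes "even_connection E es k p" "m \<le> k" "{p (2*m), z} \<in> E"
  shows "p 0 \<in> cnbhd E z \<or> even_connected E es (p 0) z"
proof (cases "m = 0")
  case True
  then show ?thesis using assms(3) by (simp add: cnbhd_def insert_commute)
next
  case False
  define q where "q = p(2*m+1 := z)"
  have "even_connection E es m q"
    unfolding even_connection_def
  proof (intro conjI allI impI)
    show "1 \<le> m" using False by simp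
  next
    fix r assume "r < 2*m+1"
    then consider "r = 2*m" | "r < 2*m" by linarith
    then show "{q r, q (Suc r)} \<in> E"
      using assms by cases (auto simp: q_def even_connection_def)
  next
    fix l assume "l < m"
    then show "{q (2*l+1), q (2*l+2)} \<in> set es" using assms(1,2) by (auto simp: q_def even_connection_def)
  next
    fix e
    have "{l. l < m \<and> {q (2*l+1), q (2*l+2)} = e} \<subseteq> {l. l < k \<and> {p (2*l+1), p (2*l+2)} = e}"
      using assms(2) by (auto simp: q_def)
    then have "card {l. l < m \<and> {q (2*l+1), q (2*l+2)} = e}
        \<le> card {l. l < k \<and> {p (2*l+1), p (2*l+2)} = e}"
      by (rule card_mono[rotated]) simp
    also have "\<dots> \<le> count (mset es) e" using assms(1) by (simp add: even_connection_def)
    finally show "card {l. l < m \<and> {q (2*l+1), q (2*l+2)} = e} \<le> count (mset es) e" .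
  qed
  moreover have "q 0 = p 0" "q (2*m+1) = z" by (auto simp: q_def)
  ultimately show ?thesis unfolding even_connected_iff by blast
qed

text \<open>The parity condition says that p 0, ..., p j, followed by w unless p j = w, has odd length.\<close>

lemma even_connection_meets_cnbhd_start:
  assumes "even_connection E es k p" "j \<le> 2*k+1" "p j \<in> cnbhd E w" "odd j \<longleftrightarrow> p j = w"
  shows "p 0 \<in> cnbhd E w \<or> even_connected E es (p 0) w"
proof (cases "odd j")
  case True
  then obtain l where j: "j = Suc (2*l)" by (metis oddE Suc_eq_plus1)
  with assms(1,2) have "{p (2*l), p (Suc (2*l))} \<in> E" by (simp add: even_connection_def)
  then have "{p (2*l), w} \<in> E" using True assms(4) j by simp
  then show ?thesis using assms(2) j by (intro even_connection_prefix_edge[OF assms(1)]) auto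
next
  case False
  then obtain m where j: "j = 2*m" by (metis evenE)
  then have "{p (2*m), w} \<in> E" using assms(3,4) False by (auto simp: cnbhd_def insert_commute)
  then show ?thesis using assms(2) j by (intro even_connection_prefix_edge[OF assms(1)]) auto
qed

lemma even_connection_meets_cnbhd:
  assumes "even_connection E es k p" "j \<le> 2*k+1" "p j \<in> cnbhd E w"
  shows "p 0 \<in> cnbhd E w \<or> even_connected E es (p 0) w
       \<or> p (2*k+1) \<in> cnbhd E w \<or> even_connected E es (p (2*k+1)) w"
proof (cases "odd j \<longleftrightarrow> p j = w")
  case True
  then show ?thesis using even_connection_meets_cnbhd_start[OF assms] by blast
next
  case False
  let ?q = "\<lambda>r. p (2*k+1-r)"
  have "2*k+1-(2*k+1-j) = j" "odd (2*k+1-j) \<longleftrightarrow> even j" using assms(2) by auto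
  then have "2*k+1-j \<le> 2*k+1" "?q (2*k+1-j) \<in> cnbhd E w" "odd (2*k+1-j) \<longleftrightarrow> ?q (2*k+1-j) = w"
    using False assms(3) by auto
  from even_connection_meets_cnbhd_start[OF even_connection_reverse[OF assms(1)] this]
  show ?thesis by simp
qed

lemma even_connected_del_cnbhd:
  assumes "\<And>e. e \<in> E \<Longrightarrow> e \<subseteq> V" and "even_connected E es u v"
    and "u \<notin> cnbhd E w" "\<not> even_connected E es u w"
    and "v \<notin> cnbhd E w" "\<not> even_connected E es v w"
  shows "even_connected (del_E V E (cnbhd E w)) (filter (\<lambda>e. e \<in> del_E V E (cnbhd E w)) es) u v"
proof -
  obtain k p where p: "even_connection E es k p" "p 0 = u" "p (2*k+1) = v"
    using assms(2) unfolding even_connected_iff by blast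
  have avoid: "p r \<notin> cnbhd E w" if "r \<le> 2*k+1" for r
    using even_connection_meets_cnbhd[OF p(1) that] assms(3-6) p(2,3) by blast
  have "{p r, p (Suc r)} \<in> del_E V E (cnbhd E w)" if "r < 2*k+1" for r
  proof -
    have "{p r, p (Suc r)} \<in> E" using p(1) that by (simp add: even_connection_def)
    moreover have "p r \<notin> cnbhd E w" "p (Suc r) \<notin> cnbhd E w" using avoid that by auto
    ultimately show ?thesis using assms(1) by (auto simp: del_E_def)
  qed
  then show ?thesis
    using even_connection_filter[OF p(1)] p(2,3) unfolding even_connected_iff by blast
qed

lemma assoc_E_cases [consumes 1, case_names Inl_Inl Inl_Inr]:
  assumes "e \<in> assoc_E V E es"
  obtains (Inl_Inl) u v where "e = {Inl u, Inl v}" "{u, v} \<in> E \<or> (u \<noteq> v \<and> even_connected E es u v)"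
    | (Inl_Inr) u where "e = {Inl u, Inr u}" "even_connected E es u u"
  using assms unfolding assoc_E_def by blast

lemma assoc_E_mono:
  assumes "E1 \<subseteq> E" "mset es1 \<subseteq># mset es"
  shows "assoc_E V1 E1 es1 \<subseteq> assoc_E V E es"
  using even_connected_mono[OF _ assms] assms(1) unfolding assoc_E_def by blast

lemma Union_assoc_E_subset:
  assumes "\<And>e. e \<in> E \<Longrightarrow> e \<subseteq> V"
  shows "\<Union>(assoc_E V E es) \<subseteq> assoc_V V E es"
proof
  fix a assume "a \<in> \<Union>(assoc_E V E es)"
  then obtain e where e: "e \<in> assoc_E V E es" "a \<in> e" by blast
  have "\<Union>E \<subseteq> V" using assms by blast
  from e(1) show "a \<in> assoc_V V E es"
  proof (cases rule: assoc_E_cases)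
    case (Inl_Inl u v)
    have "u \<in> \<Union>E \<and> v \<in> \<Union>E"
    proof (cases "{u, v} \<in> E")
      case False
      with Inl_Inl(2) show ?thesis using even_connected_mem_Union by metis
    qed blast
    then have "u \<in> V" "v \<in> V" using \<open>\<Union>E \<subseteq> V\<close> by auto
    then show ?thesis using e(2) Inl_Inl(1) by (auto simp: assoc_V_def)
  next
    case (Inl_Inr u)
    then have "u \<in> V" using \<open>\<Union>E \<subseteq> V\<close> even_connected_mem_Union[OF Inl_Inr(2)] by auto
    then show ?thesis using e(2) Inl_Inr by (auto simp: assoc_V_def)
  qed
qed

lemma Inl_mem_cnbhd_assoc_E:
  assumes "u \<in> cnbhd E w \<or> even_connected E es u w"
  shows "Inl u \<in> cnbhd (assoc_E V E es) (Inl w)"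
proof (cases "u = w")
  case False
  with assms have "{w, u} \<in> E \<or> (u \<noteq> w \<and> even_connected E es u w)" by (simp add: cnbhd_def)
  then have "{Inl w, Inl u} \<in> assoc_E V E es" unfolding assoc_E_def by (auto simp: insert_commute)
  then show ?thesis by (simp add: cnbhd_def)
qed (simp add: cnbhd_def)

lemma del_cnbhd_assoc_E_subset:
  fixes E :: "'a set set" and w :: 'a
  assumes "\<And>e. e \<in> E \<Longrightarrow> e \<subseteq> V"
  defines "N \<equiv> cnbhd E w"
  defines "EH \<equiv> del_E V E N"
  shows "del_E (assoc_V V E es) (assoc_E V E es) (cnbhd (assoc_E V E es) (Inl w))
       \<subseteq> assoc_E (del_V V N) EH (filter (\<lambda>e. e \<in> EH) es)"
proof
  let ?N' = "cnbhd (assoc_E V E es) (Inl w)"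
  have survivor: "u \<notin> N \<and> \<not> even_connected E es u w" if "Inl u \<notin> ?N'" for u
    using that Inl_mem_cnbhd_assoc_E[of u E w es V] unfolding N_def by blast
  fix e assume "e \<in> del_E (assoc_V V E es) (assoc_E V E es) ?N'"
  then have e: "e \<in> assoc_E V E es" "e \<inter> ?N' = {}" by (auto simp: del_E_def)
  then show "e \<in> assoc_E (del_V V N) EH (filter (\<lambda>e. e \<in> EH) es)"
  proof (cases rule: assoc_E_cases)
    case (Inl_Inl u v)
    then have "u \<notin> N \<and> \<not> even_connected E es u w" "v \<notin> N \<and> \<not> even_connected E es v w"
      using e(2) survivor by auto
    then have "{u, v} \<in> EH \<or> (u \<noteq> v \<and> even_connected EH (filter (\<lambda>e. e \<in> EH) es) u v)"
      using Inl_Inl(2) assms(1) even_connected_del_cnbhd[OF assms(1)]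
      unfolding N_def EH_def by (auto simp: del_E_def)
    then show ?thesis unfolding Inl_Inl(1) assoc_E_def by blast
  next
    case (Inl_Inr u)
    then have "u \<notin> N \<and> \<not> even_connected E es u w" using e(2) survivor by auto
    then have "even_connected EH (filter (\<lambda>e. e \<in> EH) es) u u"
      using Inl_Inr(2) even_connected_del_cnbhd[OF assms(1)] unfolding N_def EH_def by blast
    then show ?thesis unfolding Inl_Inr(1) assoc_E_def by blast
  qed
qed

theorem lemma4p5:
  fixes V :: "'a set" and E :: "'a set set" and x y :: "nat \<Rightarrow> 'a"
    and h s :: nat and es :: "'a set list" and w :: 'a
  assumes "graph V E" and "very_well_covered V E"
    and "V = x ` {1..h} \<union> y ` {1..h}"
    and "inj_on x {1..h}" and "inj_on y {1..h}" and "x ` {1..h} \<inter> y ` {1..h} = {}"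
    and "min_vertex_cover V E (x ` {1..h})"
    and "max_indep_set V E (y ` {1..h})"
    and "\<forall>i\<in>{1..h}. {x i, y i} \<in> E"
    and "s \<ge> 1" and "length es = s" and "set es \<subseteq> E"
    and "w \<in> V"
  shows "let VH = del_V V (cnbhd E w);
             EH = del_E V E (cnbhd E w);
             esH = filter (\<lambda>e. e \<in> EH) es;
             V' = assoc_V V E es;
             E' = assoc_E V E es;
             E2 = del_E V' E' (cnbhd E' (Inl w))
         in induced_subgraph (\<Union> E2) E2 (assoc_V VH EH esH) (assoc_E VH EH esH)"
proof -
  have edges: "e \<subseteq> V" if "e \<in> E" for e
    using assms(1) that unfolding graph_def by fastforce
  define VH where "VH = del_V V (cnbhd E w)"
  define EH where "EH = del_E V E (cnbhd E w)"
  define esH where "esH = filter (\<lambda>e. e \<in> EH) es"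
  define E2 where "E2 = del_E (assoc_V V E es) (assoc_E V E es) (cnbhd (assoc_E V E es) (Inl w))"
  have E2_sub: "E2 \<subseteq> assoc_E VH EH esH"
    using del_cnbhd_assoc_E_subset[OF edges] unfolding E2_def VH_def EH_def esH_def by blast
  have H'_sub: "assoc_E VH EH esH \<subseteq> assoc_E V E es"
    by (rule assoc_E_mono) (auto simp: EH_def esH_def del_E_def)
  have "\<Union>(assoc_E VH EH esH) \<subseteq> assoc_V VH EH esH"
    by (rule Union_assoc_E_subset) (auto simp: EH_def VH_def del_E_def del_V_def)
  then have "induced_subgraph (\<Union> E2) E2 (assoc_V VH EH esH) (assoc_E VH EH esH)"
    using E2_sub H'_sub unfolding induced_subgraph_def E2_def del_E_def by blast
  then show ?thesis unfolding Let_def VH_def EH_def esH_def E2_def .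
qed

end
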